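(* Let $x\in\mathbb{Z}^2$ and let $(S_n^{(1)})_{n\in\mathbb{N}}$ and $(S_n^{(2)})_{n\in\mathbb{N}}$ be two independent random walks in $\mathbb{Z}^2$ with the same law, each starting at $x$. That is, $S_0^{(i)}=x$ and $S_n^{(i)}=x+X_1^{(i)}+\cdots+X_n^{(i)}$ for $n\ge 1$ and $i=1,2$, where the sequences $(X_k^{(1)})_{k\ge1}$ and $(X_k^{(2)})_{k\ge1}$ are independent of each other, and each consists of i.i.d. $\mathbb{Z}^2$-valued random variables with one and the same common law $\mu$. Assume the walks are square integrable, i.e. $\mathbb{E}\big(\|X_1^{(1)}\|_2^2\big)<\infty$, where $\|\cdot\|_2$ is the Euclidean norm. Then, with probability one, $S_n^{(1)}=S_n^{(2)}$ for infinitely many $n\in\mathbb{N}$.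
   Context: A random walk in $\mathbb{Z}^2$ starting at $x\in\mathbb{Z}^2$ is a sequence $S_0=x$, $S_n=x+X_1+\cdots+X_n$, where $(X_n)_{n\ge1}$ are i.i.d. $\mathbb{Z}^2$-valued random variables. It is called square integrable if $\mathbb{E}(\|X_1\|_2^2)<\infty$. Two walks are identically distributed when they have the same starting point and the same step law. *)

theory Defs
  imports "HOL-Probability.Probability"
begin

definition walk :: "int \<times> int \<Rightarrow> (nat \<Rightarrow> 'a \<Rightarrow> int \<times> int) \<Rightarrow> nat \<Rightarrow> 'a \<Rightarrow> int \<times> int" where
  "walk x X n \<omega> = (fst x + (\<Sum>k\<in>{1..n}. fst (X k \<omega>)), snd x + (\<Sum>k\<in>{1..n}. snd (X k \<omega>)))"

definition sqnorm2 :: "int \<times> int \<Rightarrow> real" where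
  "sqnorm2 v = real_of_int (fst v) ^ 2 + real_of_int (snd v) ^ 2"

end

theory Submission
  imports Defs
begin

(* The walks meet at time n exactly when the difference walk, with i.i.d. steps X1 k - X2 k,
   is at 0.  For a walk with i.i.d. steps, "return at time k, then no return during (k, k + m]"
   has probability P(return at k) * P(no return during (0, m]); summing over the last return
   before time N shows that, if the return probabilities are not summable, P(no return during
   (0, m]) tends to 0, so the walk returns infinitely often almost surely.
   They are not summable: by independence and equality of laws, P(S1 n = S2 n) is the sum over z
   of P(S1 n = z)^2, hence at least P(S1 n in B)^2 / card B for every finite B (Cauchy-Schwarz),
   and by Chebyshev's inequality in each coordinate a box B of side O(sqrt n) around the mean
   has probability at least 1/2.  So P(S1 n = S2 n) >= c / n. *)

lemma (in prob_space) events_avoiding: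
  assumes "A \<in> events" "\<And>j. j \<in> J \<Longrightarrow> E j \<in> events" "countable J"
  shows "{\<omega> \<in> A. \<forall>j\<in>J. \<omega> \<notin> E j} \<in> events"
proof -
  have "{\<omega> \<in> A. \<forall>j\<in>J. \<omega> \<notin> E j} = A - (\<Union>j\<in>J. E j)"
    by auto
  then show ?thesis
    using assms by (auto intro!: sets.countable_UN'')
qed

locale renewal_events = prob_space +
  fixes E :: "nat \<Rightarrow> 'a set"
  assumes events_E: "\<And>n. E n \<in> events"
    and renewal: "\<And>k m. prob {\<omega> \<in> E k. \<forall>j\<in>{k<..k+m}. \<omega> \<notin> E j}
                      = prob (E k) * prob {\<omega> \<in> space M. \<forall>j\<in>{0<..m}. \<omega> \<notin> E j}"
begin

lemma sum_prob_last_visit_le_1: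
  shows "(\<Sum>k\<le>N. prob (E k) * prob {\<omega> \<in> space M. \<forall>j\<in>{0<..N - k}. \<omega> \<notin> E j}) \<le> 1"
proof -
  define F where "F k = {\<omega> \<in> E k. \<forall>j\<in>{k<..N}. \<omega> \<notin> E j}" for k
  have "disjoint_family_on F {..N}"
    unfolding disjoint_family_on_def
  proof (intro ballI impI)
    fix a b assume "a \<in> {..N}" "b \<in> {..N}" "a \<noteq> b"
    then consider "a < b" | "b < a"
      by linarith
    then show "F a \<inter> F b = {}"
      using \<open>a \<in> {..N}\<close> \<open>b \<in> {..N}\<close> by cases (auto simp: F_def)
  qed
  moreover have "F k \<in> events" for k
    unfolding F_def using events_E by (intro events_avoiding) auto
  ultimately have "(\<Sum>k\<le>N. prob (F k)) = prob (\<Union>k\<le>N. F k)"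
    by (intro measure_finite_Union[symmetric]) auto
  also have "\<dots> \<le> 1"
    by (rule prob_le_1)
  also have "(\<Sum>k\<le>N. prob (F k))
      = (\<Sum>k\<le>N. prob (E k) * prob {\<omega> \<in> space M. \<forall>j\<in>{0<..N - k}. \<omega> \<notin> E j})"
  proof (rule sum.cong)
    fix k assume "k \<in> {..N}"
    then show "prob (F k) = prob (E k) * prob {\<omega> \<in> space M. \<forall>j\<in>{0<..N - k}. \<omega> \<notin> E j}"
      using renewal[of k "N - k"] by (simp add: F_def)
  qed simp
  finally show ?thesis .
qed

lemma prob_eq_0_if_le_prob_no_return:
  assumes diverge: "\<not> summable (\<lambda>n. prob (E n))"
    and le: "\<And>m. prob A \<le> prob {\<omega> \<in> space M. \<forall>j\<in>{0<..m}. \<omega> \<notin> E j}"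
  shows "prob A = 0"
proof (rule ccontr)
  assume "prob A \<noteq> 0"
  then have "0 < prob A"
    using measure_nonneg[of M A] by (simp add: order_less_le)
  have "(\<Sum>k\<le>N. prob (E k)) \<le> 1 / prob A" for N
  proof -
    have "prob A * (\<Sum>k\<le>N. prob (E k)) = (\<Sum>k\<le>N. prob (E k) * prob A)"
      by (simp add: sum_distrib_left mult.commute)
    also have "\<dots> \<le> (\<Sum>k\<le>N. prob (E k) * prob {\<omega> \<in> space M. \<forall>j\<in>{0<..N - k}. \<omega> \<notin> E j})"
      using le by (intro sum_mono mult_left_mono) auto
    also have "\<dots> \<le> 1"
      by (rule sum_prob_last_visit_le_1)
    finally show ?thesis
      using \<open>0 < prob A\<close> by (simp add: field_simps)
  qed
  then have "summable (\<lambda>n. prob (E n))"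
    by (intro bounded_imp_summable) auto
  then show False
    using diverge by blast
qed

theorem AE_infinitely_often:
  assumes diverge: "\<not> summable (\<lambda>n. prob (E n))"
  shows "AE \<omega> in M. infinite {n. \<omega> \<in> E n}"
proof -
  note null = prob_eq_0_if_le_prob_no_return[OF diverge]
  have AE_notin: "AE \<omega> in M. \<omega> \<notin> A" if "A \<in> events" "prob A = 0" for A
    using that by (intro AE_not_in) (simp add: null_sets_def emeasure_eq_measure)
  have no_return_events: "{\<omega> \<in> space M. \<forall>j\<in>{0<..m}. \<omega> \<notin> E j} \<in> events" for m
    using events_E by (intro events_avoiding) auto
  define never where "never = {\<omega> \<in> space M. \<forall>j\<in>{0<..}. \<omega> \<notin> E j}"
  define last where "last k = {\<omega> \<in> E k. \<forall>j\<in>{k<..}. \<omega> \<notin> E j}" for k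
  have "never \<in> events" "last k \<in> events" for k
    unfolding never_def last_def using events_E by (auto intro!: events_avoiding)
  have "prob never = 0"
    using no_return_events by (intro null) (auto simp: never_def intro!: finite_measure_mono)
  have "prob (last k) = 0" for k
  proof (rule null)
    fix m
    have "prob (last k) \<le> prob {\<omega> \<in> E k. \<forall>j\<in>{k<..k+m}. \<omega> \<notin> E j}"
      using events_E by (intro finite_measure_mono events_avoiding) (auto simp: last_def)
    also have "\<dots> \<le> prob {\<omega> \<in> space M. \<forall>j\<in>{0<..m}. \<omega> \<notin> E j}"
      unfolding renewal using prob_le_1 by (simp add: mult_left_le_one_le)
    finally show "prob (last k) \<le> prob {\<omega> \<in> space M. \<forall>j\<in>{0<..m}. \<omega> \<notin> E j}" .
  qed
  then have "AE \<omega> in M. \<forall>k. \<omega> \<notin> last k"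
    using \<open>\<And>k. last k \<in> events\<close> by (simp add: AE_all_countable AE_notin)
  moreover have "AE \<omega> in M. \<omega> \<notin> never"
    using \<open>never \<in> events\<close> \<open>prob never = 0\<close> by (rule AE_notin)
  ultimately show ?thesis
    using AE_space
  proof eventually_elim
    case (elim \<omega>)
    show "infinite {n. \<omega> \<in> E n}"
    proof
      assume fin: "finite {n. \<omega> \<in> E n}"
      have "{n. \<omega> \<in> E n} \<noteq> {}"
        using elim by (auto simp: never_def)
      then have "\<omega> \<in> last (Max {n. \<omega> \<in> E n})"
        using Max_in[OF fin] Max_ge[OF fin] by (auto simp: last_def not_le[symmetric])
      then show False
        using elim by blast
    qed
  qed
qed

end

lemma (in prob_space) expectation_square_sum_indep:
  fixes U :: "'i \<Rightarrow> 'a \<Rightarrow> real"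
  assumes "finite J"
    and measurable: "\<And>j. j \<in> J \<Longrightarrow> random_variable borel (U j)"
    and square_integrable: "\<And>j. j \<in> J \<Longrightarrow> integrable M (\<lambda>\<omega>. U j \<omega> ^ 2)"
    and centred: "\<And>j. j \<in> J \<Longrightarrow> expectation (U j) = 0"
    and indep: "\<And>i j. i \<in> J \<Longrightarrow> j \<in> J \<Longrightarrow> i \<noteq> j \<Longrightarrow> indep_var borel (U i) borel (U j)"
  shows "integrable M (\<lambda>\<omega>. (\<Sum>j\<in>J. U j \<omega>)\<^sup>2)"
    and "expectation (\<lambda>\<omega>. (\<Sum>j\<in>J. U j \<omega>)\<^sup>2) = (\<Sum>j\<in>J. expectation (\<lambda>\<omega>. U j \<omega> ^ 2))"
proof -
  have integrable: "integrable M (U j)" if "j \<in> J" for j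
    using square_integrable_imp_integrable measurable square_integrable that by blast
  have products: "integrable M (\<lambda>\<omega>. U i \<omega> * U j \<omega>) \<and>
      expectation (\<lambda>\<omega>. U i \<omega> * U j \<omega>) = (if i = j then expectation (\<lambda>\<omega>. U j \<omega> ^ 2) else 0)"
    if "i \<in> J" "j \<in> J" for i j
  proof (cases "i = j")
    case True
    then show ?thesis
      using square_integrable that by (simp add: power2_eq_square)
  next
    case False
    then have "indep_var borel (U i) borel (U j)"
      using indep that by blast
    note indep_var_integrable[OF this integrable integrable] indep_var_lebesgue_integral[OF this integrable integrable]
    then show ?thesis
      using that centred False by simp
  qed
  have square_sum: "(\<Sum>j\<in>J. U j \<omega>)\<^sup>2 = (\<Sum>i\<in>J. \<Sum>j\<in>J. U i \<omega> * U j \<omega>)" for \<omega>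
    by (simp add: power2_eq_square sum_product)
  show "integrable M (\<lambda>\<omega>. (\<Sum>j\<in>J. U j \<omega>)\<^sup>2)"
    unfolding square_sum by (intro Bochner_Integration.integrable_sum) (simp add: products)
  have "expectation (\<lambda>\<omega>. (\<Sum>j\<in>J. U j \<omega>)\<^sup>2)
      = (\<Sum>i\<in>J. \<Sum>j\<in>J. expectation (\<lambda>\<omega>. U i \<omega> * U j \<omega>))"
    unfolding square_sum by (simp add: Bochner_Integration.integral_sum products)
  also have "\<dots> = (\<Sum>j\<in>J. expectation (\<lambda>\<omega>. U j \<omega> ^ 2))"
    using \<open>finite J\<close> by (simp add: products)
  finally show "expectation (\<lambda>\<omega>. (\<Sum>j\<in>J. U j \<omega>)\<^sup>2) = (\<Sum>j\<in>J. expectation (\<lambda>\<omega>. U j \<omega> ^ 2))" .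
qed

lemma (in prob_space) prob_eq_point_square:
  fixes A B :: "'a \<Rightarrow> 'b::countable"
  assumes indep: "indep_var (count_space UNIV) A (count_space UNIV) B"
    and same_law: "distr M (count_space UNIV) A = distr M (count_space UNIV) B"
  shows "prob {\<omega> \<in> space M. A \<omega> = z \<and> B \<omega> = z} = (prob {\<omega> \<in> space M. A \<omega> = z})\<^sup>2"
proof -
  have A: "random_variable (count_space UNIV) A" and B: "random_variable (count_space UNIV) B"
    using indep by (auto dest: indep_var_rv1 indep_var_rv2)
  have "prob (A -` {z} \<inter> space M) = prob (B -` {z} \<inter> space M)"
    using measure_distr[OF A, of "{z}"] measure_distr[OF B, of "{z}"] same_law by simp
  moreover have "prob {\<omega> \<in> space M. A \<omega> \<in> {z} \<and> B \<omega> \<in> {z}}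
      = prob {\<omega> \<in> space M. A \<omega> \<in> {z}} * prob {\<omega> \<in> space M. B \<omega> \<in> {z}}"
    by (rule prob_indep_random_variable[OF indep]) auto
  ultimately show ?thesis
    by (simp add: vimage_def Int_def conj_commute power2_eq_square)
qed

lemma (in prob_space) prob_eq_ge_square_div_card:
  fixes A B :: "'a \<Rightarrow> 'b::countable"
  assumes indep: "indep_var (count_space UNIV) A (count_space UNIV) B"
    and same_law: "distr M (count_space UNIV) A = distr M (count_space UNIV) B"
    and "finite S"
  shows "(prob {\<omega> \<in> space M. A \<omega> \<in> S})\<^sup>2 / card S \<le> prob {\<omega> \<in> space M. A \<omega> = B \<omega>}"
proof -
  have A: "random_variable (count_space UNIV) A" and B: "random_variable (count_space UNIV) B"
    using indep by (auto dest: indep_var_rv1 indep_var_rv2)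
  have events: "{\<omega> \<in> space M. A \<omega> = z} \<in> events" "{\<omega> \<in> space M. A \<omega> = z \<and> B \<omega> = z} \<in> events" for z
  proof -
    have "{\<omega> \<in> space M. A \<omega> = z} = A -` {z} \<inter> space M"
      "{\<omega> \<in> space M. A \<omega> = z \<and> B \<omega> = z} = (A -` {z} \<inter> space M) \<inter> (B -` {z} \<inter> space M)"
      by auto
    then show "{\<omega> \<in> space M. A \<omega> = z} \<in> events" "{\<omega> \<in> space M. A \<omega> = z \<and> B \<omega> = z} \<in> events"
      using measurable_sets[OF A] measurable_sets[OF B] by auto
  qed
  have "{\<omega> \<in> space M. A \<omega> = B \<omega>} = (\<Union>z. {\<omega> \<in> space M. A \<omega> = z \<and> B \<omega> = z})"
    by auto
  then have "{\<omega> \<in> space M. A \<omega> = B \<omega>} \<in> events"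
    using events by auto
  have "prob {\<omega> \<in> space M. A \<omega> \<in> S} = prob (\<Union>z\<in>S. {\<omega> \<in> space M. A \<omega> = z})"
    by (intro arg_cong[where f = prob]) auto
  also have "\<dots> = (\<Sum>z\<in>S. prob {\<omega> \<in> space M. A \<omega> = z})"
    using \<open>finite S\<close> events by (intro measure_finite_Union) (auto simp: disjoint_family_on_def)
  finally have "(prob {\<omega> \<in> space M. A \<omega> \<in> S})\<^sup>2 / card S \<le> (\<Sum>z\<in>S. (prob {\<omega> \<in> space M. A \<omega> = z})\<^sup>2)"
    using sum_squared_le_sum_of_squares[of "\<lambda>z. prob {\<omega> \<in> space M. A \<omega> = z}" S]
    by (cases "card S = 0") (simp_all add: divide_le_eq mult.commute sum_nonneg)
  also have "\<dots> = (\<Sum>z\<in>S. prob {\<omega> \<in> space M. A \<omega> = z \<and> B \<omega> = z})"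
    using prob_eq_point_square[OF indep same_law] by simp
  also have "\<dots> = prob (\<Union>z\<in>S. {\<omega> \<in> space M. A \<omega> = z \<and> B \<omega> = z})"
    using \<open>finite S\<close> events by (intro measure_finite_Union[symmetric]) (auto simp: disjoint_family_on_def)
  also have "\<dots> \<le> prob {\<omega> \<in> space M. A \<omega> = B \<omega>}"
    using \<open>{\<omega> \<in> space M. A \<omega> = B \<omega>} \<in> events\<close> by (rule finite_measure_mono[rotated]) auto
  finally show ?thesis .
qed

lemma not_summable_ge_harmonic:
  fixes f :: "nat \<Rightarrow> real"
  assumes "c > 0" and "\<And>n. n \<ge> 1 \<Longrightarrow> c / real n \<le> f n"
  shows "\<not> summable f"
proof
  assume "summable f"
  then have "summable (\<lambda>n. c * inverse (real n))"
    by (rule summable_comparison_test'[where N = 1]) (use assms in \<open>auto simp: divide_inverse\<close>)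
  then show False
    using not_summable_harmonic[where 'a = real] \<open>c > 0\<close> by simp
qed

locale iid_family = prob_space +
  fixes X :: "'i \<Rightarrow> 'a \<Rightarrow> 'b::countable" and I :: "'i set" and \<mu> :: "'b measure"
  assumes indep_X: "indep_vars (\<lambda>_. count_space UNIV) X I"
    and distr_X: "\<And>i. i \<in> I \<Longrightarrow> distr M (count_space UNIV) (X i) = \<mu>"
begin

lemma measurable_X: "i \<in> I \<Longrightarrow> X i \<in> M \<rightarrow>\<^sub>M count_space UNIV"
  using indep_X by (simp add: indep_vars_def)

lemma PiM_count_space: "finite J \<Longrightarrow> PiM J (\<lambda>_. count_space UNIV) = count_space (PiE J (\<lambda>_. UNIV :: 'b set))"
  by (simp add: count_space_PiM_finite)

lemma iid_family_reindex:
  assumes "inj_on h J" "h ` J \<subseteq> I"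
  shows "iid_family M (\<lambda>j. X (h j)) J \<mu>"
proof unfold_locales
  have "indep_vars (\<lambda>j. PiM {h j} (\<lambda>_. count_space UNIV)) (\<lambda>j \<omega>. \<lambda>i\<in>{h j}. X i \<omega>) J"
    using assms by (intro indep_vars_restrict[OF indep_X]) (auto simp: disjoint_family_on_def inj_on_def)
  then have "indep_vars (\<lambda>_. count_space UNIV) (\<lambda>j \<omega>. (\<lambda>i\<in>{h j}. X i \<omega>) (h j)) J"
    by (rule indep_vars_compose2) simp
  then show "indep_vars (\<lambda>_. count_space UNIV) (\<lambda>j. X (h j)) J"
    by simp
  show "j \<in> J \<Longrightarrow> distr M (count_space UNIV) (X (h j)) = \<mu>" for j
    using assms distr_X by auto
qed

lemma distr_block:
  assumes "finite J" "J \<noteq> {}" "J \<subseteq> I"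
  shows "distr M (PiM J (\<lambda>_. count_space UNIV)) (\<lambda>\<omega>. \<lambda>j\<in>J. X j \<omega>) = PiM J (\<lambda>_. \<mu>)"
proof -
  have "distr M (PiM J (\<lambda>_. count_space UNIV)) (\<lambda>\<omega>. \<lambda>j\<in>J. X j \<omega>)
      = PiM J (\<lambda>j. distr M (count_space UNIV) (X j))"
    using assms indep_vars_subset[OF indep_X] measurable_X
    by (subst indep_vars_iff_distr_eq_PiM'[symmetric]) auto
  also have "\<dots> = PiM J (\<lambda>_. \<mu>)"
    using assms distr_X by (intro PiM_cong) auto
  finally show ?thesis .
qed

lemma distr_block_map:
  assumes "finite J" "J \<noteq> {}" "J \<subseteq> I"
  shows "distr M (count_space UNIV) (\<lambda>\<omega>. F (\<lambda>j\<in>J. X j \<omega>)) = distr (PiM J (\<lambda>_. \<mu>)) (count_space UNIV) F"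
proof -
  have "(\<lambda>\<omega>. \<lambda>j\<in>J. X j \<omega>) \<in> M \<rightarrow>\<^sub>M PiM J (\<lambda>_. count_space UNIV)"
    using assms measurable_X by (intro measurable_restrict) auto
  moreover have "F \<in> PiM J (\<lambda>_. count_space UNIV) \<rightarrow>\<^sub>M count_space UNIV"
    by (simp add: PiM_count_space assms)
  ultimately have "distr (distr M (PiM J (\<lambda>_. count_space UNIV)) (\<lambda>\<omega>. \<lambda>j\<in>J. X j \<omega>)) (count_space UNIV) F
      = distr M (count_space UNIV) (F \<circ> (\<lambda>\<omega>. \<lambda>j\<in>J. X j \<omega>))"
    by (rule distr_distr[rotated])
  then show ?thesis
    by (simp add: distr_block[OF assms] comp_def)
qed

lemma prob_block:
  assumes "finite J" "J \<noteq> {}" "J \<subseteq> I"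
  shows "prob {\<omega> \<in> space M. P (\<lambda>j\<in>J. X j \<omega>)} = measure (PiM J (\<lambda>_. \<mu>)) {f \<in> PiE J (\<lambda>_. UNIV). P f}"
proof -
  have "(\<lambda>\<omega>. \<lambda>j\<in>J. X j \<omega>) \<in> M \<rightarrow>\<^sub>M PiM J (\<lambda>_. count_space UNIV)"
    using assms measurable_X by (intro measurable_restrict) auto
  then have "measure (PiM J (\<lambda>_. \<mu>)) {f \<in> PiE J (\<lambda>_. UNIV). P f}
      = prob ((\<lambda>\<omega>. \<lambda>j\<in>J. X j \<omega>) -` {f \<in> PiE J (\<lambda>_. UNIV). P f} \<inter> space M)"
    unfolding distr_block[OF assms, symmetric] by (rule measure_distr) (auto simp: PiM_count_space assms)
  also have "\<dots> = prob {\<omega> \<in> space M. P (\<lambda>j\<in>J. X j \<omega>)}"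
    by (intro arg_cong[where f = prob]) auto
  finally show ?thesis ..
qed

lemma events_block:
  assumes "finite J" "J \<subseteq> I"
  shows "{\<omega> \<in> space M. P (\<lambda>j\<in>J. X j \<omega>)} \<in> events"
proof -
  have "(\<lambda>\<omega>. \<lambda>j\<in>J. X j \<omega>) \<in> M \<rightarrow>\<^sub>M count_space (PiE J (\<lambda>_. UNIV))"
    using assms measurable_X by (auto simp flip: PiM_count_space intro!: measurable_restrict)
  from measurable_sets[OF this, of "{f \<in> PiE J (\<lambda>_. UNIV). P f}"]
  have "(\<lambda>\<omega>. \<lambda>j\<in>J. X j \<omega>) -` {f \<in> PiE J (\<lambda>_. UNIV). P f} \<inter> space M \<in> events"
    by simp
  also have "(\<lambda>\<omega>. \<lambda>j\<in>J. X j \<omega>) -` {f \<in> PiE J (\<lambda>_. UNIV). P f} \<inter> space M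
      = {\<omega> \<in> space M. P (\<lambda>j\<in>J. X j \<omega>)}"
    by auto
  finally show ?thesis .
qed

lemma prob_block_reindex:
  assumes "finite J" "inj_on h J" "h ` J \<subseteq> I" "inj_on h' J" "h' ` J \<subseteq> I"
  shows "prob {\<omega> \<in> space M. P (\<lambda>j\<in>J. X (h j) \<omega>)} = prob {\<omega> \<in> space M. P (\<lambda>j\<in>J. X (h' j) \<omega>)}"
proof (cases "J = {}")
  case False
  interpret h: iid_family M "\<lambda>j. X (h j)" J \<mu>
    using assms by (intro iid_family_reindex)
  interpret h': iid_family M "\<lambda>j. X (h' j)" J \<mu>
    using assms by (intro iid_family_reindex)
  show ?thesis
    using h.prob_block h'.prob_block assms False by simp
qed (simp add: restrict_def)

lemma indep_var_blocks:
  assumes "finite A" "finite B" "A \<inter> B = {}" "A \<subseteq> I" "B \<subseteq> I"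
  shows "indep_var (count_space UNIV) (\<lambda>\<omega>. \<lambda>i\<in>A. X i \<omega>) (count_space UNIV) (\<lambda>\<omega>. \<lambda>i\<in>B. X i \<omega>)"
proof -
  have "indep_var (PiM A (\<lambda>_. count_space UNIV)) (\<lambda>\<omega>. \<lambda>i\<in>A. X i \<omega>)
      (PiM B (\<lambda>_. count_space UNIV)) (\<lambda>\<omega>. \<lambda>i\<in>B. X i \<omega>)"
    using assms by (intro indep_var_restrict[OF indep_X])
  then have "indep_var (count_space UNIV) (id \<circ> (\<lambda>\<omega>. \<lambda>i\<in>A. X i \<omega>)) (count_space UNIV) (id \<circ> (\<lambda>\<omega>. \<lambda>i\<in>B. X i \<omega>))"
    by (rule indep_var_compose) (simp_all add: PiM_count_space assms)
  then show ?thesis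
    by simp
qed

lemma indep_var_X:
  assumes "i \<in> I" "j \<in> I" "i \<noteq> j"
  shows "indep_var (count_space UNIV) (X i) (count_space UNIV) (X j)"
proof -
  have "indep_var (count_space UNIV) ((\<lambda>f. f i) \<circ> (\<lambda>\<omega>. \<lambda>k\<in>{i}. X k \<omega>))
      (count_space UNIV) ((\<lambda>f. f j) \<circ> (\<lambda>\<omega>. \<lambda>k\<in>{j}. X k \<omega>))"
    using assms by (intro indep_var_compose[OF indep_var_blocks]) auto
  then show ?thesis
    by (simp add: comp_def)
qed

lemma borel_measurable_law: "i \<in> I \<Longrightarrow> g \<in> borel_measurable \<mu>"
  using distr_X[of i] by (metis borel_measurable_count_space measurable_distr_eq1)

lemma iid_family_block_map:
  fixes F :: "('k \<Rightarrow> 'b) \<Rightarrow> 'c::countable"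
  assumes "finite B" "B \<noteq> {}"
    and h: "\<And>j. j \<in> L \<Longrightarrow> inj_on (h j) B" "\<And>j. j \<in> L \<Longrightarrow> h j ` B \<subseteq> I"
    and disjoint: "disjoint_family_on (\<lambda>j. h j ` B) L"
  shows "iid_family M (\<lambda>j \<omega>. F (\<lambda>b\<in>B. X (h j b) \<omega>)) L (distr (PiM B (\<lambda>_. \<mu>)) (count_space UNIV) F)"
proof unfold_locales
  have "indep_vars (\<lambda>j. PiM (h j ` B) (\<lambda>_. count_space UNIV)) (\<lambda>j \<omega>. \<lambda>i\<in>h j ` B. X i \<omega>) L"
    using h disjoint by (intro indep_vars_restrict[OF indep_X]) auto
  then have "indep_vars (\<lambda>_. count_space UNIV) (\<lambda>j \<omega>. F (\<lambda>b\<in>B. (\<lambda>i\<in>h j ` B. X i \<omega>) (h j b))) L"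
    by (rule indep_vars_compose2) (simp add: PiM_count_space \<open>finite B\<close>)
  then show "indep_vars (\<lambda>_. count_space UNIV) (\<lambda>j \<omega>. F (\<lambda>b\<in>B. X (h j b) \<omega>)) L"
    by (rule indep_vars_cong[THEN iffD1, rotated -1]) (auto intro!: arg_cong[where f = F] restrict_ext)
  fix j assume "j \<in> L"
  interpret block: iid_family M "\<lambda>b. X (h j b)" B \<mu>
    using h \<open>j \<in> L\<close> by (intro iid_family_reindex)
  show "distr M (count_space UNIV) (\<lambda>\<omega>. F (\<lambda>b\<in>B. X (h j b) \<omega>)) = distr (PiM B (\<lambda>_. \<mu>)) (count_space UNIV) F"
    using assms by (intro block.distr_block_map) auto
qed

lemma integrable_X_iff:
  fixes g :: "'b \<Rightarrow> 'c::{banach, second_countable_topology}"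
  shows "i \<in> I \<Longrightarrow> integrable M (\<lambda>\<omega>. g (X i \<omega>)) \<longleftrightarrow> integrable \<mu> g"
  using integrable_distr_eq[OF measurable_X, of i g] distr_X by simp

lemma integral_X:
  fixes g :: "'b \<Rightarrow> 'c::{banach, second_countable_topology}"
  shows "i \<in> I \<Longrightarrow> (\<integral>\<omega>. g (X i \<omega>) \<partial>M) = (\<integral>z. g z \<partial>\<mu>)"
  using integral_distr[OF measurable_X, of i g] distr_X by simp

lemma prob_sum_deviation_le:
  fixes g :: "'b \<Rightarrow> real"
  assumes "finite J" "J \<subseteq> I" "integrable \<mu> (\<lambda>z. g z ^ 2)" "0 < a"
  shows "prob {\<omega> \<in> space M. a \<le> \<bar>(\<Sum>j\<in>J. g (X j \<omega>)) - card J * (\<integral>z. g z \<partial>\<mu>)\<bar>}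
           \<le> card J * (\<integral>z. (g z - (\<integral>z. g z \<partial>\<mu>))\<^sup>2 \<partial>\<mu>) / a\<^sup>2"
proof -
  define c where "c = (\<integral>z. g z \<partial>\<mu>)"
  define U where "U = (\<lambda>j \<omega>. g (X j \<omega>) - c)"
  have measurable_g: "random_variable borel (\<lambda>\<omega>. g (X j \<omega>))" if "j \<in> J" for j
    using that assms(2) by (intro measurable_compose[OF measurable_X borel_measurable_count_space]) auto
  have measurable_U: "random_variable borel (U j)" if "j \<in> J" for j
    unfolding U_def using measurable_g[OF that] by (rule borel_measurable_diff) simp
  have integrable_g2: "integrable M (\<lambda>\<omega>. g (X j \<omega>) ^ 2)" if "j \<in> J" for j
    using that assms(2,3) integrable_X_iff[of j "\<lambda>z. g z ^ 2"] by auto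
  have integrable_g: "integrable M (\<lambda>\<omega>. g (X j \<omega>))" if "j \<in> J" for j
    using square_integrable_imp_integrable[OF measurable_g[OF that] integrable_g2[OF that]] .
  have "integrable M (\<lambda>\<omega>. U j \<omega> ^ 2)" if "j \<in> J" for j
    using integrable_g[OF that] integrable_g2[OF that]
    by (simp add: U_def power2_diff)
  moreover have "expectation (U j) = 0" if "j \<in> J" for j
    using that assms(2) integrable_g[OF that] integral_X[of j g] prob_space
    by (auto simp: U_def c_def)
  moreover have "indep_var borel (U i) borel (U j)" if "i \<in> J" "j \<in> J" "i \<noteq> j" for i j
    using indep_var_compose[OF indep_var_X[of i j], of "\<lambda>z. g z - c" borel "\<lambda>z. g z - c" borel] that assms(2)
    by (auto simp: U_def comp_def)
  ultimately have integrable_sum: "integrable M (\<lambda>\<omega>. (\<Sum>j\<in>J. U j \<omega>)\<^sup>2)"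
    and expectation_sum: "expectation (\<lambda>\<omega>. (\<Sum>j\<in>J. U j \<omega>)\<^sup>2) = (\<Sum>j\<in>J. expectation (\<lambda>\<omega>. U j \<omega> ^ 2))"
    using expectation_square_sum_indep[OF assms(1) measurable_U] by auto
  have "expectation (\<lambda>\<omega>. U j \<omega> ^ 2) = (\<integral>z. (g z - c)\<^sup>2 \<partial>\<mu>)" if "j \<in> J" for j
    using that assms(2) integral_X[of j "\<lambda>z. (g z - c)\<^sup>2"] by (auto simp: U_def)
  then have "expectation (\<lambda>\<omega>. (\<Sum>j\<in>J. U j \<omega>)\<^sup>2) = card J * (\<integral>z. (g z - c)\<^sup>2 \<partial>\<mu>)"
    by (simp add: expectation_sum)
  moreover have "(\<Sum>j\<in>J. U j \<omega>) = (\<Sum>j\<in>J. g (X j \<omega>)) - card J * c" for \<omega>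
    by (simp add: U_def sum_subtractf)
  moreover have "random_variable borel (\<lambda>\<omega>. \<Sum>j\<in>J. U j \<omega>)"
    using measurable_U by auto
  ultimately show ?thesis
    using second_moment_method[of "\<lambda>\<omega>. \<Sum>j\<in>J. U j \<omega>", OF _ integrable_sum \<open>0 < a\<close>]
    by (simp add: c_def)
qed

end

lemma ball_greaterThanAtMost_add_iff:
  fixes k m :: nat
  shows "(\<forall>j\<in>{k<..k+m}. P j) \<longleftrightarrow> (\<forall>d\<in>{1..m}. P (k + d))"
proof -
  have "{k<..k+m} = (+) k ` {1..m}"
    by (auto simp: image_iff intro!: bexI[where x = "_ - k"])
  then show ?thesis
    by (simp only: Set.ball_simps(9))
qed

lemma sum_atLeastAtMost_1_add_split:
  fixes f :: "nat \<Rightarrow> 'b::comm_monoid_add"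
  shows "(\<Sum>i=1..k+d. f i) = (\<Sum>i=1..k. f i) + (\<Sum>i=1..d. f (i + k))"
  using sum.ub_add_nat[of 1 k f d] sum.shift_bounds_cl_nat_ivl[of f 1 k d] by (simp add: add.commute)

locale iid_walk = iid_family M X "{1..}" \<mu>
  for M :: "'a measure" and X :: "nat \<Rightarrow> 'a \<Rightarrow> 'b::{countable, ab_group_add}" and \<mu>
begin

lemma renewal_at_return:
  "prob {\<omega> \<in> space M. (\<Sum>i=1..k. X i \<omega>) = 0 \<and> (\<forall>j\<in>{k<..k+m}. (\<Sum>i=1..j. X i \<omega>) \<noteq> 0)}
     = prob {\<omega> \<in> space M. (\<Sum>i=1..k. X i \<omega>) = 0} * prob {\<omega> \<in> space M. \<forall>j\<in>{0<..m}. (\<Sum>i=1..j. X i \<omega>) \<noteq> 0}"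
proof -
  define returns where "returns g \<longleftrightarrow> (\<Sum>i=1..k. g i) = 0" for g :: "nat \<Rightarrow> 'b"
  define avoids where "avoids g \<longleftrightarrow> (\<forall>j\<in>{1..m}. (\<Sum>i=1..j. g i) \<noteq> 0)" for g :: "nat \<Rightarrow> 'b"
  define avoids_after where "avoids_after g \<longleftrightarrow> avoids (\<lambda>i\<in>{1..m}. g (i + k))" for g :: "nat \<Rightarrow> 'b"
  have returns: "returns (\<lambda>i\<in>{1..k}. X i \<omega>) \<longleftrightarrow> (\<Sum>i=1..k. X i \<omega>) = 0" for \<omega>
    by (simp add: returns_def)
  have avoids_after: "avoids_after (\<lambda>i\<in>{k<..k+m}. X i \<omega>) \<longleftrightarrow> avoids (\<lambda>i\<in>{1..m}. X (i + k) \<omega>)" for \<omega>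
    unfolding avoids_after_def by (intro arg_cong[where f = avoids] restrict_ext) auto
  have avoids: "avoids (\<lambda>i\<in>{1..m}. g i) \<longleftrightarrow> (\<forall>j\<in>{0<..m}. (\<Sum>i=1..j. g i) \<noteq> 0)" for g
    by (auto simp: avoids_def)
  \<comment> \<open>after a return at time k, the later returns are those of the walk restarted at time k\<close>
  have "(\<forall>j\<in>{k<..k+m}. (\<Sum>i=1..j. X i \<omega>) \<noteq> 0) \<longleftrightarrow> avoids (\<lambda>i\<in>{1..m}. X (i + k) \<omega>)"
    if "(\<Sum>i=1..k. X i \<omega>) = 0" for \<omega>
    unfolding ball_greaterThanAtMost_add_iff
    using that sum_atLeastAtMost_1_add_split[of "\<lambda>i. X i \<omega>" k] by (simp add: avoids_def)
  then have "prob {\<omega> \<in> space M. (\<Sum>i=1..k. X i \<omega>) = 0 \<and> (\<forall>j\<in>{k<..k+m}. (\<Sum>i=1..j. X i \<omega>) \<noteq> 0)}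
      = prob {\<omega> \<in> space M. returns (\<lambda>i\<in>{1..k}. X i \<omega>) \<and> avoids_after (\<lambda>i\<in>{k<..k+m}. X i \<omega>)}"
    unfolding returns avoids_after by (intro arg_cong[where f = prob]) blast
  also have "\<dots> = prob {\<omega> \<in> space M. returns (\<lambda>i\<in>{1..k}. X i \<omega>)}
      * prob {\<omega> \<in> space M. avoids_after (\<lambda>i\<in>{k<..k+m}. X i \<omega>)}"
  proof -
    have "indep_var (count_space UNIV) (\<lambda>\<omega>. \<lambda>i\<in>{1..k}. X i \<omega>) (count_space UNIV) (\<lambda>\<omega>. \<lambda>i\<in>{k<..k+m}. X i \<omega>)"
      by (rule indep_var_blocks) auto
    from prob_indep_random_variable[OF this, of "Collect returns" "Collect avoids_after"] show ?thesis
      by simp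
  qed
  also have "prob {\<omega> \<in> space M. avoids_after (\<lambda>i\<in>{k<..k+m}. X i \<omega>)}
      = prob {\<omega> \<in> space M. avoids (\<lambda>i\<in>{1..m}. X (i + k) \<omega>)}"
    unfolding avoids_after ..
  also have "\<dots> = prob {\<omega> \<in> space M. avoids (\<lambda>i\<in>{1..m}. X (id i) \<omega>)}"
    by (rule prob_block_reindex) auto
  finally show ?thesis
    by (simp only: returns avoids id_apply)
qed

end

sublocale iid_walk \<subseteq> returns: renewal_events M "\<lambda>n. {\<omega> \<in> space M. (\<Sum>i=1..n. X i \<omega>) = 0}"
proof unfold_locales
  show "{\<omega> \<in> space M. (\<Sum>i=1..n. X i \<omega>) = 0} \<in> events" for n
    using events_block[of "{1..n}" "\<lambda>g. (\<Sum>i=1..n. g i) = 0"] by simp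
  show "prob {\<omega> \<in> {\<omega> \<in> space M. (\<Sum>i=1..k. X i \<omega>) = 0}.
          \<forall>j\<in>{k<..k+m}. \<omega> \<notin> {\<omega> \<in> space M. (\<Sum>i=1..j. X i \<omega>) = 0}}
      = prob {\<omega> \<in> space M. (\<Sum>i=1..k. X i \<omega>) = 0}
        * prob {\<omega> \<in> space M. \<forall>j\<in>{0<..m}. \<omega> \<notin> {\<omega> \<in> space M. (\<Sum>i=1..j. X i \<omega>) = 0}}" for k m
    using renewal_at_return[of k m] by (simp cong: conj_cong)
qed

context iid_walk
begin

lemma AE_infinitely_many_returns:
  assumes "\<not> summable (\<lambda>n. prob {\<omega> \<in> space M. (\<Sum>i=1..n. X i \<omega>) = 0})"
  shows "AE \<omega> in M. infinite {n. (\<Sum>i=1..n. X i \<omega>) = 0}"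
  using returns.AE_infinitely_often[OF assms] AE_space by eventually_elim simp

end

lemma sqnorm2_nonneg: "0 \<le> sqnorm2 z"
  by (simp add: sqnorm2_def)

lemma walk_eq_sum: "walk x X n \<omega> = x + (\<Sum>k=1..n. X k \<omega>)"
  by (simp add: walk_def fst_sum snd_sum prod_eq_iff)

lemma card_int_interval_le:
  assumes "0 \<le> a"
  shows "real (card {\<lceil>p - a\<rceil>..\<lfloor>p + a\<rfloor>}) \<le> 2 * a + 1"
proof (cases "\<lceil>p - a\<rceil> \<le> \<lfloor>p + a\<rfloor>")
  case True
  then have "real (card {\<lceil>p - a\<rceil>..\<lfloor>p + a\<rfloor>}) = real_of_int (\<lfloor>p + a\<rfloor> - \<lceil>p - a\<rceil> + 1)"
    by simp
  also have "\<dots> \<le> 2 * a + 1"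
    using of_int_floor_le[of "p + a"] le_of_int_ceiling[of "p - a"] by linarith
  finally show ?thesis .
qed (use assms in simp)

lemma card_box_le:
  fixes n w :: real
  assumes "1 \<le> n" "0 \<le> w"
  defines "a \<equiv> 2 * sqrt (n * w)"
  shows "real (card ({\<lceil>p - a\<rceil>..\<lfloor>p + a\<rfloor>} \<times> {\<lceil>q - a\<rceil>..\<lfloor>q + a\<rfloor>})) \<le> (4 * sqrt w + 1)\<^sup>2 * n"
proof -
  have "0 \<le> a"
    using assms by (simp add: a_def)
  have "2 * a + 1 \<le> sqrt n * (4 * sqrt w + 1)"
    using assms by (simp add: a_def real_sqrt_mult algebra_simps)
  then have "(2 * a + 1)\<^sup>2 \<le> (sqrt n * (4 * sqrt w + 1))\<^sup>2"
    using \<open>0 \<le> a\<close> by (intro power_mono) auto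
  also have "\<dots> = (4 * sqrt w + 1)\<^sup>2 * n"
    using assms by (simp add: power_mult_distrib)
  finally have "(2 * a + 1)\<^sup>2 \<le> (4 * sqrt w + 1)\<^sup>2 * n" .
  moreover have "real (card ({\<lceil>p - a\<rceil>..\<lfloor>p + a\<rfloor>} \<times> {\<lceil>q - a\<rceil>..\<lfloor>q + a\<rfloor>})) \<le> (2 * a + 1)\<^sup>2"
    unfolding card_cartesian_product of_nat_mult power2_eq_square
    using \<open>0 \<le> a\<close> by (intro mult_mono card_int_interval_le) auto
  ultimately show ?thesis
    by linarith
qed

lemma events_walk:
  assumes "iid_family M X {1..} \<mu>"
  shows "{\<omega> \<in> space M. P (walk x X n \<omega>)} \<in> sets M"
  using iid_family.events_block[OF assms, of "{1..n}" "\<lambda>g. P (x + (\<Sum>k=1..n. g k))"]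
  by (simp add: walk_eq_sum)

lemma prob_walk_coordinate_deviation_le:
  fixes X :: "nat \<Rightarrow> 'a \<Rightarrow> int \<times> int" and \<phi> :: "int \<times> int \<Rightarrow> int"
  assumes "iid_family M X {1..} \<mu>" and "integrable \<mu> sqnorm2"
    and additive: "\<And>u v. \<phi> (u + v) = \<phi> u + \<phi> v"
    and bound: "\<And>z. (real_of_int (\<phi> z))\<^sup>2 \<le> sqnorm2 z"
    and "0 < a"
  shows "measure M {\<omega> \<in> space M. a \<le> \<bar>real_of_int (\<phi> (walk x X n \<omega>)) - (\<phi> x + n * (\<integral>z. \<phi> z \<partial>\<mu>))\<bar>}
           \<le> n * (\<integral>z. (\<phi> z - (\<integral>z. \<phi> z \<partial>\<mu>))\<^sup>2 \<partial>\<mu>) / a\<^sup>2"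
proof -
  interpret iid_family M X "{1..}" \<mu>
    by fact
  have "\<phi> 0 = 0"
    using additive[of 0 0] by simp
  then have "\<phi> (walk x X n \<omega>) = \<phi> x + (\<Sum>k=1..n. \<phi> (X k \<omega>))" for \<omega>
    using sum_comp_morphism[of \<phi> "\<lambda>k. X k \<omega>" "{1..n}"] additive by (simp add: walk_eq_sum comp_def)
  moreover have "integrable \<mu> (\<lambda>z. (real_of_int (\<phi> z))\<^sup>2)"
    using bound sqnorm2_nonneg
    by (intro Bochner_Integration.integrable_bound[OF assms(2) borel_measurable_law[of 1]] AE_I2) auto
  ultimately show ?thesis
    using prob_sum_deviation_le[of "{1..n}" "\<lambda>z. real_of_int (\<phi> z)" a] \<open>0 < a\<close>
    by (simp add: algebra_simps)
qed

lemma (in prob_space) prob_ge_1_minus_union_bound: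
  assumes "A \<in> events" "B \<in> events" "C \<in> events" "space M - A \<subseteq> B \<union> C"
  shows "1 - prob B - prob C \<le> prob A"
proof -
  have "1 - prob A = prob (space M - A)"
    using prob_compl[OF assms(1)] by simp
  also have "\<dots> \<le> prob (B \<union> C)"
    using assms by (intro finite_measure_mono) auto
  also have "\<dots> \<le> prob B + prob C"
    using assms(2,3) by (rule measure_Un_le)
  finally show ?thesis
    by linarith
qed

lemma walk_concentration_at:
  fixes X :: "nat \<Rightarrow> 'a \<Rightarrow> int \<times> int"
  assumes iid: "iid_family M X {1..} \<mu>" and "integrable \<mu> sqnorm2" and "n \<ge> 1"
  defines "m1 \<equiv> \<integral>z. real_of_int (fst z) \<partial>\<mu>" and "m2 \<equiv> \<integral>z. real_of_int (snd z) \<partial>\<mu>"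
  defines "v1 \<equiv> \<integral>z. (real_of_int (fst z) - m1)\<^sup>2 \<partial>\<mu>" and "v2 \<equiv> \<integral>z. (real_of_int (snd z) - m2)\<^sup>2 \<partial>\<mu>"
  shows "\<exists>S. finite S \<and> real (card S) \<le> (4 * sqrt (v1 + v2 + 1) + 1)\<^sup>2 * n
           \<and> 1 / 2 \<le> measure M {\<omega> \<in> space M. walk x X n \<omega> \<in> S}"
proof -
  interpret iid_family M X "{1..}" \<mu>
    by fact
  define a where "a = 2 * sqrt (real n * (v1 + v2 + 1))"
  define p1 where "p1 = fst x + real n * m1"
  define p2 where "p2 = snd x + real n * m2"
  define S where "S = {\<lceil>p1 - a\<rceil>..\<lfloor>p1 + a\<rfloor>} \<times> {\<lceil>p2 - a\<rceil>..\<lfloor>p2 + a\<rfloor>}"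
  define C1 where "C1 = {\<omega> \<in> space M. a \<le> \<bar>real_of_int (fst (walk x X n \<omega>)) - p1\<bar>}"
  define C2 where "C2 = {\<omega> \<in> space M. a \<le> \<bar>real_of_int (snd (walk x X n \<omega>)) - p2\<bar>}"
  have "0 \<le> v1" "0 \<le> v2"
    by (simp_all add: v1_def v2_def)
  then have "0 < a" and a_square: "a\<^sup>2 = 4 * real n * (v1 + v2 + 1)"
    using \<open>n \<ge> 1\<close> by (simp_all add: a_def power_mult_distrib)
  have "prob C1 \<le> real n * v1 / a\<^sup>2" "prob C2 \<le> real n * v2 / a\<^sup>2"
    using prob_walk_coordinate_deviation_le[OF iid assms(2), of fst a x n]
      prob_walk_coordinate_deviation_le[OF iid assms(2), of snd a x n] \<open>0 < a\<close>
    by (simp_all add: C1_def C2_def p1_def p2_def m1_def m2_def v1_def v2_def sqnorm2_def)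
  moreover have "real n * v1 / a\<^sup>2 + real n * v2 / a\<^sup>2 \<le> 1 / 2"
  proof -
    have "real n * v1 + real n * v2 \<le> 1 / 2 * a\<^sup>2"
      using a_square mult_nonneg_nonneg[of "real n" v1] mult_nonneg_nonneg[of "real n" v2]
        \<open>0 \<le> v1\<close> \<open>0 \<le> v2\<close> by (simp add: algebra_simps)
    then show ?thesis
      using \<open>0 < a\<close> by (simp add: add_divide_distrib[symmetric] pos_divide_le_eq)
  qed
  moreover have "space M - {\<omega> \<in> space M. walk x X n \<omega> \<in> S} \<subseteq> C1 \<union> C2"
    by (auto simp: C1_def C2_def S_def mem_Times_iff ceiling_le_iff le_floor_iff abs_less_iff not_le)
  then have "1 - prob C1 - prob C2 \<le> prob {\<omega> \<in> space M. walk x X n \<omega> \<in> S}"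
    unfolding C1_def C2_def by (intro prob_ge_1_minus_union_bound events_walk[OF iid])
  ultimately have "1 / 2 \<le> prob {\<omega> \<in> space M. walk x X n \<omega> \<in> S}"
    by linarith
  moreover have "real (card S) \<le> (4 * sqrt (v1 + v2 + 1) + 1)\<^sup>2 * n"
    using card_box_le[of n "v1 + v2 + 1"] \<open>n \<ge> 1\<close> \<open>0 \<le> v1\<close> \<open>0 \<le> v2\<close> by (simp add: S_def a_def)
  moreover have "finite S"
    by (simp add: S_def)
  ultimately show ?thesis
    by blast
qed

lemma walk_concentration:
  fixes X :: "nat \<Rightarrow> 'a \<Rightarrow> int \<times> int"
  assumes "iid_family M X {1..} \<mu>" and "integrable \<mu> sqnorm2"
  shows "\<exists>K>0. \<forall>n\<ge>1. \<exists>S. finite S \<and> real (card S) \<le> K * n \<and> 1 / 2 \<le> measure M {\<omega> \<in> space M. walk x X n \<omega> \<in> S}"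
proof -
  define v1 where "v1 = (\<integral>z. (real_of_int (fst z) - (\<integral>z. real_of_int (fst z) \<partial>\<mu>))\<^sup>2 \<partial>\<mu>)"
  define v2 where "v2 = (\<integral>z. (real_of_int (snd z) - (\<integral>z. real_of_int (snd z) \<partial>\<mu>))\<^sup>2 \<partial>\<mu>)"
  have "0 < 4 * sqrt (v1 + v2 + 1) + 1"
    using real_sqrt_ge_zero[of "v1 + v2 + 1"] by (simp add: v1_def v2_def add_nonneg_pos)
  then have "(4 * sqrt (v1 + v2 + 1) + 1)\<^sup>2 > 0"
    by (rule zero_less_power)
  then show ?thesis
    using walk_concentration_at[OF assms, of _ x] unfolding v1_def v2_def by blast
qed

lemma (in prob_space) indep_var_walks:
  fixes X1 X2 :: "nat \<Rightarrow> 'a \<Rightarrow> int \<times> int"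
  assumes "iid_family M (\<lambda>(b, k). if b then X1 k else X2 k) {(b, k). k \<ge> 1} \<mu>"
  shows "indep_var (count_space UNIV) (walk x X1 n) (count_space UNIV) (walk x X2 n)"
proof -
  interpret V: iid_family M "\<lambda>(b, k). if b then X1 k else X2 k" "{(b, k). k \<ge> 1}" \<mu>
    by fact
  let ?block = "\<lambda>c \<omega>. \<lambda>p\<in>{c} \<times> {1..n}. (case p of (b, k) \<Rightarrow> if b then X1 k else X2 k) \<omega>"
  have "indep_var (count_space UNIV) (?block True) (count_space UNIV) (?block False)"
    by (rule V.indep_var_blocks) auto
  then have "indep_var (count_space UNIV) ((\<lambda>g. x + (\<Sum>k=1..n. g (True, k))) \<circ> ?block True)
      (count_space UNIV) ((\<lambda>g. x + (\<Sum>k=1..n. g (False, k))) \<circ> ?block False)"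
    by (rule indep_var_compose) auto
  then show ?thesis
    by (simp add: comp_def walk_eq_sum[abs_def])
qed

lemma (in prob_space) distr_walks_eq:
  assumes "iid_family M X1 {1..} \<mu>" "iid_family M X2 {1..} \<mu>"
  shows "distr M (count_space UNIV) (walk x X1 n) = distr M (count_space UNIV) (walk x X2 n)"
proof (cases "n = 0")
  case False
  then show ?thesis
    using iid_family.distr_block_map[OF assms(1), of "{1..n}" "\<lambda>g. x + (\<Sum>k=1..n. g k)"]
      iid_family.distr_block_map[OF assms(2), of "{1..n}" "\<lambda>g. x + (\<Sum>k=1..n. g k)"]
    by (simp add: walk_eq_sum[abs_def])
qed (simp add: walk_eq_sum[abs_def])

lemma (in prob_space) prob_walks_meet_ge:
  fixes X1 X2 :: "nat \<Rightarrow> 'a \<Rightarrow> int \<times> int"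
  assumes iid: "iid_family M (\<lambda>(b, k). if b then X1 k else X2 k) {(b, k). k \<ge> 1} \<mu>"
    and "integrable \<mu> sqnorm2"
  shows "\<exists>c>0. \<forall>n\<ge>1. c / real n \<le> prob {\<omega> \<in> space M. walk x X1 n \<omega> = walk x X2 n \<omega>}"
proof -
  have X1: "iid_family M X1 {1..} \<mu>" and X2: "iid_family M X2 {1..} \<mu>"
    using iid_family.iid_family_reindex[OF iid, of "\<lambda>k. (True, k)" "{1..}"]
      iid_family.iid_family_reindex[OF iid, of "\<lambda>k. (False, k)" "{1..}"]
    by (simp_all add: inj_on_def image_subset_iff)
  obtain K where "K > 0" and box: "\<And>n. n \<ge> 1 \<Longrightarrow>
      \<exists>S. finite S \<and> real (card S) \<le> K * n \<and> 1 / 2 \<le> prob {\<omega> \<in> space M. walk x X1 n \<omega> \<in> S}"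
    using walk_concentration[OF X1 assms(2)] by blast
  have "1 / (4 * K) / real n \<le> prob {\<omega> \<in> space M. walk x X1 n \<omega> = walk x X2 n \<omega>}" if n: "n \<ge> 1" for n
  proof -
    obtain S where "finite S" "real (card S) \<le> K * n"
      and half: "1 / 2 \<le> prob {\<omega> \<in> space M. walk x X1 n \<omega> \<in> S}"
      using box[OF n] by blast
    have "1 / 4 \<le> (prob {\<omega> \<in> space M. walk x X1 n \<omega> \<in> S})\<^sup>2"
      using power_mono[OF half, of 2] by (simp add: power_divide)
    moreover have "S \<noteq> {}"
      using half by auto
    ultimately have "1 / 4 / (K * n) \<le> (prob {\<omega> \<in> space M. walk x X1 n \<omega> \<in> S})\<^sup>2 / card S"
      using \<open>finite S\<close> \<open>real (card S) \<le> K * n\<close> by (intro frac_le) auto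
    also have "\<dots> \<le> prob {\<omega> \<in> space M. walk x X1 n \<omega> = walk x X2 n \<omega>}"
      using indep_var_walks[OF iid] distr_walks_eq[OF X1 X2] \<open>finite S\<close>
      by (rule prob_eq_ge_square_div_card)
    finally show ?thesis
      by (simp add: field_simps)
  qed
  then show ?thesis
    using \<open>K > 0\<close> by (intro exI[of _ "1 / (4 * K)"]) auto
qed

theorem mainTheorem1:
  fixes M :: "'a measure"
    and x :: "int \<times> int"
    and X1 X2 :: "nat \<Rightarrow> 'a \<Rightarrow> int \<times> int"
    and \<mu> :: "(int \<times> int) measure"
  assumes "prob_space M"
    and "prob_space.indep_vars M (\<lambda>_. count_space UNIV)
           (\<lambda>(b, k). if b then X1 k else X2 k) {(b, k). k \<ge> 1}"
    and "\<And>k. k \<ge> 1 \<Longrightarrow> distr M (count_space UNIV) (X1 k) = \<mu>"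
    and "\<And>k. k \<ge> 1 \<Longrightarrow> distr M (count_space UNIV) (X2 k) = \<mu>"
    and "integrable M (\<lambda>\<omega>. sqnorm2 (X1 1 \<omega>))"
  shows "AE \<omega> in M. infinite {n. walk x X1 n \<omega> = walk x X2 n \<omega>}"
proof -
  have iid: "iid_family M (\<lambda>(b, k). if b then X1 k else X2 k) {(b, k). k \<ge> 1} \<mu>"
    using assms unfolding iid_family_def iid_family_axioms_def by auto
  interpret V: iid_family M "\<lambda>(b, k). if b then X1 k else X2 k" "{(b, k). k \<ge> 1}" \<mu>
    by (rule iid)
  have "integrable \<mu> sqnorm2"
    using V.integrable_X_iff[of "(True, 1)" sqnorm2] assms(5) by simp
  then obtain c where "c > 0"
    and meet: "\<And>n. n \<ge> 1 \<Longrightarrow> c / real n \<le> V.prob {\<omega> \<in> space M. walk x X1 n \<omega> = walk x X2 n \<omega>}"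
    using V.prob_walks_meet_ge[OF iid] by blast
  have "iid_family M (\<lambda>k \<omega>. (\<lambda>f. f True - f False) (\<lambda>b\<in>UNIV. (case (b, k) of (b, k) \<Rightarrow> if b then X1 k else X2 k) \<omega>))
      {1..} (distr (PiM UNIV (\<lambda>_. \<mu>)) (count_space UNIV) (\<lambda>f. f True - f False))"
    by (rule V.iid_family_block_map) (auto simp: inj_on_def disjoint_family_on_def)
  then interpret D: iid_walk M "\<lambda>k \<omega>. X1 k \<omega> - X2 k \<omega>" "distr (PiM UNIV (\<lambda>_. \<mu>)) (count_space UNIV) (\<lambda>f. f True - f False)"
    by (simp add: iid_walk_def)
  have meet_iff: "walk x X1 n \<omega> = walk x X2 n \<omega> \<longleftrightarrow> (\<Sum>k=1..n. X1 k \<omega> - X2 k \<omega>) = 0" for n \<omega>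
    by (simp add: walk_eq_sum sum_subtractf)
  have "AE \<omega> in M. infinite {n. (\<Sum>k=1..n. X1 k \<omega> - X2 k \<omega>) = 0}"
    using not_summable_ge_harmonic[OF \<open>c > 0\<close> meet] by (intro D.AE_infinitely_many_returns) (simp add: meet_iff)
  then show ?thesis
    by (simp add: meet_iff)
qed

end
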